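(* Let $n$ be a nonnegative integer and let $x$ be a complex number such that no denominator below vanishes. Then \[ \sum_{k=0}^{n}(-1)^k\binom{n}{k} \frac{\binom{\frac{x}{2}+k}{k}^2\binom{x-\frac{1}{2}+k}{k}} {\binom{\frac{x-1}{2}+k}{k}^2\binom{x-\frac{1}{2}+n+k}{k}} \frac{1+2x+4k}{1+2x+2n+2k}H_{2k}^2(x) =\frac{1}{4}\frac{\binom{x-\frac{1}{2}+n}{n}\binom{-\frac{3}{2}+n}{n}} {\binom{\frac{x-1}{2}+n}{n}^2} \big\{\big[H_n(\tfrac{x-1}{2})-H_n(-\tfrac{3}{2})\big]^2-H_{n}^{\langle2\rangle}(-\tfrac{3}{2})\big\}, \] where $H_{2k}^2(x)$ denotes $(H_{2k}(x))^2$.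
   Context: For complex $z$ and a nonnegative integer $k$, $\binom{z}{k}=\frac{z(z-1)\cdots(z-k+1)}{k!}$ (with $\binom{z}{0}=1$). For complex $x$ and nonnegative integer $m$, $H_0(x)=0$, $H_m(x)=\sum_{j=1}^m\frac{1}{x+j}$, $H_0^{\langle2\rangle}(x)=0$ and $H_m^{\langle2\rangle}(x)=\sum_{j=1}^m\frac{1}{(x+j)^2}$ for $m\ge1$. The parameter $x$ is assumed to be such that all denominators are nonzero. *)

theory Defs
  imports Complex_Main
begin

definition H :: "nat \<Rightarrow> complex \<Rightarrow> complex" where
  "H m x = (\<Sum>j=1..m. 1 / (x + of_nat j))"

definition H2 :: "nat \<Rightarrow> complex \<Rightarrow> complex" where
  "H2 m x = (\<Sum>j=1..m. 1 / (x + of_nat j)^2)"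

end

theory Submission
  imports Defs
begin

text \<open>
  Off the real axis every denominator is nonzero. Write \<open>a(n,k)\<close> for the summand without its
  harmonic factor and \<open>h\<^sub>k = H\<^sub>2\<^sub>k(x)\<close>. A Zeilberger-type certificate \<open>G\<^sub>t(n,k)\<close>, a quadratic
  polynomial in \<open>h\<^sub>k + t\<close> times a hypergeometric term, satisfies for every \<open>t\<close>
  \<open>A a(n+1,k) (h\<^sub>k+t)\<^sup>2 - B a(n,k) (h\<^sub>k+t)\<^sup>2 + C a(n,k) (h\<^sub>k+t) + D a(n,k) = G\<^sub>t(n,k+1) - G\<^sub>t(n,k)\<close>
  with \<open>A, B, C, D\<close> depending on \<open>x, n\<close> only. Summing over \<open>k\<close> telescopes, and the coefficients
  of \<open>t\<^sup>2\<close>, \<open>t\<close>, \<open>1\<close> are first-order recurrences in \<open>n\<close> for \<open>\<Sum>\<^sub>k a\<close>, \<open>\<Sum>\<^sub>k a h\<^sub>k\<close> and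
  \<open>\<Sum>\<^sub>k a h\<^sub>k\<^sup>2\<close>, which the closed forms also satisfy. Finally both sides of the identity are
  continuous at every admissible \<open>x\<close>, so agreement off the real axis extends to all of them.
\<close>

section \<open>Generalised binomial coefficients\<close>

text \<open>As a simp rule this discharges \<open>z \<noteq> 0\<close> for the affine expressions in \<open>x\<close> occurring
  below, whose imaginary parts are nonzero multiples of \<open>Im x\<close>.\<close>

lemma nonreal_eq_0_iff: "Im z \<noteq> 0 \<Longrightarrow> (z = 0) \<longleftrightarrow> False"
  by auto

lemma gbinomial_nonreal_nonzero:
  fixes y :: complex
  assumes "Im y \<noteq> 0"
  shows "y gchoose k \<noteq> 0"
proof -
  have "(\<Prod>i=0..<k. y - of_nat i) \<noteq> 0"
    using assms by (auto simp: nonreal_eq_0_iff)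
  then show ?thesis
    unfolding gbinomial_prod_rev by simp
qed

lemma gbinomial_Suc_shift:
  fixes y :: "'a :: field_char_0"
  shows "(y + of_nat (Suc k)) gchoose Suc k = ((y + of_nat k) gchoose k) * (y + of_nat (Suc k)) / of_nat (Suc k)"
  using gbinomial_rec[of "y + of_nat k" k] by (simp add: add_ac)

lemma gbinomial_shift_mult:
  fixes y :: "'a :: field_char_0"
  shows "((y + 1 + of_nat k) gchoose k) * (y + 1) = ((y + of_nat k) gchoose k) * (y + 1 + of_nat k)"
proof -
  have "pochhammer (y + 2) k * (y + 1) = pochhammer (y + 1) k * (y + 1 + of_nat k)"
  proof -
    have "pochhammer (y + 1) (Suc k) = (y + 1) * pochhammer (y + 1 + 1) k" by (rule pochhammer_rec)
    moreover have "pochhammer (y + 1) (Suc k) = pochhammer (y + 1) k * (y + 1 + of_nat k)" by (rule pochhammer_Suc)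
    moreover have "y + 1 + 1 = y + 2" by simp
    ultimately show ?thesis by (simp add: mult.commute)
  qed
  moreover have "y + 1 + of_nat k - of_nat k + 1 = y + 2" "y + of_nat k - of_nat k + 1 = y + 1"
    by simp_all
  ultimately show ?thesis
    unfolding gbinomial_pochhammer' by (simp add: field_simps)
qed

lemma binomial_Suc_right_mult: "(m choose Suc k) * Suc k = (m choose k) * (m - k)"
proof (cases m)
  case (Suc m')
  then show ?thesis
    using binomial_absorb_comp[of m k] Suc_times_binomial[of k m'] by (simp add: mult.commute)
qed simp

section \<open>Term ratios of the summand\<close>

definition summand :: "complex \<Rightarrow> nat \<Rightarrow> nat \<Rightarrow> complex" where
  "summand x n k = (-1)^k * of_nat (n choose k)
     * (((x / 2 + of_nat k) gchoose k)^2 * ((x - 1/2 + of_nat k) gchoose k))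
     / ((((x - 1) / 2 + of_nat k) gchoose k)^2 * ((x - 1/2 + of_nat n + of_nat k) gchoose k))
     * ((1 + 2 * x + 4 * of_nat k) / (1 + 2 * x + 2 * of_nat n + 2 * of_nat k))"

definition base_term :: "complex \<Rightarrow> nat \<Rightarrow> nat \<Rightarrow> complex" where
  "base_term x n k = summand x n k / (1 + 2 * x + 4 * of_nat k)"

lemma summand_eq_0_if_gt: "n < k \<Longrightarrow> summand x n k = 0"
  by (simp add: summand_def)

lemma base_term_eq:
  assumes hx: "Im x \<noteq> 0"
  shows "base_term x n k = (-1)^k * of_nat (n choose k)
            * (((x / 2 + of_nat k) gchoose k)^2 * ((x - 1/2 + of_nat k) gchoose k))
            / ((((x - 1) / 2 + of_nat k) gchoose k)^2 * ((x - 1/2 + of_nat n + of_nat k) gchoose k)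
               * (1 + 2 * x + 2 * of_nat n + 2 * of_nat k))"
proof -
  have "a / b * (w / v) / w = a / (b * v)" if "w \<noteq> 0" for a b w v :: complex
    using that by (simp add: field_simps)
  moreover have "1 + 2 * x + 4 * of_nat k \<noteq> 0"
    by (simp add: nonreal_eq_0_iff hx)
  ultimately show ?thesis
    unfolding base_term_def summand_def by blast
qed

lemma base_term_Suc_ratio:
  assumes hx: "Im x \<noteq> 0" and km: "k \<le> m"
  shows "base_term x m (Suc k) * ((of_nat k+1)*(x+1+2*of_nat k)^2*(2*x+3+2*of_nat m+2*of_nat k))
     = -(of_nat m - of_nat k)*(x+2*of_nat k+2)^2*(2*x+1+2*of_nat k)*base_term x m k"
proof -
  define gA where "gA = (x / 2 + of_nat k) gchoose k"
  define gB where "gB = (x - 1/2 + of_nat k) gchoose k"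
  define gC where "gC = ((x - 1) / 2 + of_nat k) gchoose k"
  define gD where "gD = (x - 1/2 + of_nat m + of_nat k) gchoose k"
  define p where "p = (of_nat (Suc k) :: complex)"
  define v where "v = 1 + 2 * x + 2 * of_nat m + 2 * of_nat k"
  define v' where "v' = 1 + 2 * x + 2 * of_nat m + 2 * of_nat (Suc k)"
  define a where "a = x/2 + of_nat (Suc k)"
  define b where "b = x - 1/2 + of_nat (Suc k)"
  define c where "c = (x - 1)/2 + of_nat (Suc k)"
  define d where "d = x - 1/2 + of_nat m + of_nat (Suc k)"
  have nonzero: "p \<noteq> 0" "gC \<noteq> 0" "gD \<noteq> 0" "v \<noteq> 0" "c \<noteq> 0" "d \<noteq> 0" "v' \<noteq> 0"
    unfolding p_def gC_def gD_def v_def v'_def c_def d_def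
    by (simp_all add: gbinomial_nonreal_nonzero nonreal_eq_0_iff hx del: of_nat_Suc)
  have choose_Suc: "of_nat (m choose Suc k) = of_nat (m choose k) * (of_nat m - of_nat k) / p"
  proof -
    have "of_nat (m choose Suc k) * p = (of_nat (m choose k) * (of_nat m - of_nat k) :: complex)"
      unfolding p_def using binomial_Suc_right_mult[of m k] km by (metis of_nat_mult of_nat_diff)
    then show ?thesis using nonzero(1) by (simp add: eq_divide_eq)
  qed
  have "(-s)*(C*q/p) * ((A*a/p)^2 * (B*b/p)) / ((G*c/p)^2 * (D*d/p) * v')
     = (s*C*(A^2*B)/(G^2*D*v)) * (-q*a^2*b*v/(p*c^2*d*v'))"
    if "G \<noteq> 0" "D \<noteq> 0" for s C A B G D q :: complex
    using that nonzero by (simp add: field_simps power2_eq_square)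
  from this[OF nonzero(2,3)]
  have ratio: "base_term x m (Suc k) = base_term x m k * (-(of_nat m - of_nat k)*a^2*b*v/(p*c^2*d*v'))"
    unfolding base_term_eq[OF hx] choose_Suc gbinomial_Suc_shift
    unfolding gA_def[symmetric] gB_def[symmetric] gC_def[symmetric] gD_def[symmetric]
      v_def[symmetric] v'_def[symmetric] a_def[symmetric] b_def[symmetric] c_def[symmetric] d_def[symmetric]
    unfolding p_def[symmetric]
    by (simp only: power_Suc mult_minus1 mult.assoc)
  have "x+1+2*of_nat k = 2*c" "v = 2*d" "2*x+3+2*of_nat m+2*of_nat k = v'"
    "x+2*of_nat k+2 = 2*a" "2*x+1+2*of_nat k = 2*b" "of_nat k + 1 = p"
    unfolding a_def b_def c_def d_def v_def v'_def p_def by (simp_all add: field_simps)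
  then have "(-(of_nat m - of_nat k)*a^2*b*v/(p*c^2*d*v')) * ((of_nat k+1)*(x+1+2*of_nat k)^2*(2*x+3+2*of_nat m+2*of_nat k))
     = -(of_nat m - of_nat k)*(x+2*of_nat k+2)^2*(2*x+1+2*of_nat k)"
    using nonzero by (simp add: field_simps power2_eq_square)
  then show ?thesis
    unfolding ratio by (simp only: mult.commute mult.left_commute)
qed

lemma summand_Suc_ratio:
  assumes hx: "Im x \<noteq> 0" and kn: "k \<le> Suc n"
  shows "summand x n k * ((of_nat n+1)*(2*x+1+2*of_nat n))
     = (of_nat n+1-of_nat k)*(2*x+3+2*of_nat n+2*of_nat k)*((1+2*x+4*of_nat k)*base_term x (Suc n) k)"
proof (cases "k = Suc n")
  case True
  then show ?thesis by (simp add: summand_def)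
next
  case False
  with kn have kn': "k \<le> n" by simp
  define y where "y = x - 1/2 + of_nat n"
  define q where "q = (of_nat n + 1 - of_nat k :: complex)"
  have nonzero: "(((x - 1) / 2 + of_nat k) gchoose k)^2 \<noteq> 0" "(y + of_nat k) gchoose k \<noteq> 0"
    "y + 1 \<noteq> 0" "y + 1 + of_nat k \<noteq> 0" "1 + 2 * x + 2 * of_nat (Suc n) + 2 * of_nat k \<noteq> 0"
    "1 + 2 * x + 4 * of_nat k \<noteq> 0"
    unfolding y_def q_def using kn'
    by (simp_all add: gbinomial_nonreal_nonzero nonreal_eq_0_iff hx)
  have "q \<noteq> 0"
  proof
    assume "q = 0"
    then have "of_nat (Suc n) = (of_nat k :: complex)" by (simp add: q_def add.commute)
    with kn' show False by (simp only: of_nat_eq_iff)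
  qed
  have shift: "(x - 1/2 + of_nat (Suc n) + of_nat k) gchoose k = ((y + of_nat k) gchoose k) * (y + 1 + of_nat k) / (y + 1)"
  proof -
    have "x - 1/2 + of_nat (Suc n) + of_nat k = y + 1 + of_nat k"
      unfolding y_def by simp
    then show ?thesis
      using gbinomial_shift_mult[of y k] nonzero(3) by (simp add: eq_divide_eq)
  qed
  have choose_Suc: "of_nat (Suc n choose k) = (of_nat n + 1) * of_nat (n choose k) / q"
  proof -
    have "(Suc n - k) * (Suc n choose k) = Suc n * (n choose k)"
      using binomial_absorb_comp[of "Suc n" k] by simp
    then have "of_nat (Suc n choose k) * q = (of_nat n + 1) * (of_nat (n choose k) :: complex)"
      unfolding q_def using kn by (metis mult.commute of_nat_Suc of_nat_diff of_nat_mult add.commute)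
    then show ?thesis using `q \<noteq> 0` by (simp add: eq_divide_eq)
  qed
  have affine: "1 + 2 * x + 2 * of_nat n + 2 * of_nat k = 2 * (y + 1 + of_nat k)"
    "(of_nat n + 1) * (2 * x + 1 + 2 * of_nat n) = (of_nat n + 1) * (2 * (y + 1))"
    "2*x+3+2*of_nat n+2*of_nat k = 1 + 2 * x + 2 * of_nat (Suc n) + 2 * of_nat k"
    unfolding y_def by (simp_all add: field_simps)
  have summand_Suc: "(1 + 2 * x + 4 * of_nat k) * base_term x (Suc n) k = summand x (Suc n) k"
    unfolding base_term_def using nonzero(6) by simp
  have "s * C * P / (Q * D) * (w / (2*t)) * (p * (2*u)) = q * v' * (s * (p*C/q) * P / (Q * (D*t/u)) * (w / v'))"
    if "Q \<noteq> 0" "D \<noteq> 0" "u \<noteq> 0" "t \<noteq> 0" "v' \<noteq> 0" for s C P Q D w p u t v' :: complex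
    using that `q \<noteq> 0` by (simp add: field_simps)
  from this[OF nonzero(1-5)] show ?thesis
    unfolding summand_Suc unfolding summand_def shift choose_Suc affine unfolding y_def[symmetric] q_def .
qed

lemma H_double_Suc_diff:
  assumes "x + 2 * of_nat k + 1 \<noteq> 0" "x + 2 * of_nat k + 2 \<noteq> 0"
  shows "(H (2 * Suc k) x - H (2 * k) x) * ((x + 2 * of_nat k + 1) * (x + 2 * of_nat k + 2))
    = 2 * x + 4 * of_nat k + 3"
proof -
  have "H (2 * Suc k) x - H (2 * k) x = 1 / (x + 2 * of_nat k + 1) + 1 / (x + 2 * of_nat k + 2)"
    by (simp add: H_def add_ac)
  moreover have "(1 / a + 1 / b) * (a * b) = a + b" if "a \<noteq> 0" "b \<noteq> 0" for a b :: complex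
    using that by (simp add: distrib_right)
  ultimately show ?thesis
    using assms by simp
qed

section \<open>The certificate\<close>

text \<open>The certificate polynomials were found by computer algebra. The next three identities are
  the coefficients of \<open>h\<^sup>2\<close>, \<open>h\<close> and \<open>1\<close> in \<open>cert_G_difference\<close> after clearing denominators.\<close>

definition cert_R :: "complex \<Rightarrow> complex \<Rightarrow> complex \<Rightarrow> complex" where
 "cert_R x n k = (-3*k+10*k^2-4*k^3-8*k^4 -2*n*k+8*n*k^2-8*n*k^3 +4*x*k -16*x*k^3 +4*x*n*k -8*x*n*k^2 + x^2*k -10*x^2*k^2 -2*x^2*n*k -2*x^3*k)"
definition cert_S :: "complex \<Rightarrow> complex \<Rightarrow> complex \<Rightarrow> complex" where
 "cert_S x n k = (-6*k+14*k^2-8*k^4-10*n*k+20*n*k^2-4*n^2*k+8*n^2*k^2+2*x*k+10*x*k^2-12*x*k^3+6*x*n*k+8*x*n*k^2+4*x*n^2*k+4*x^2*k-4*x^2*k^2+4*x^2*n*k)"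
definition cert_W :: "complex \<Rightarrow> complex \<Rightarrow> complex \<Rightarrow> complex" where
 "cert_W x n k = (-12*k+16*k^2+4*k^3-8*k^4-32*n*k+24*n*k^2+8*n*k^3-28*n^2*k+8*n^2*k^2-8*n^3*k-8*x*k+16*x*k^2-8*x*k^3-16*x*n*k+16*x*n*k^2-8*x*n^2*k)"

lemma cert_coeff_h2:
  fixes x n k :: complex
  shows "((k+1)*(x+1+2*k)^2*(2*x+5+2*n+2*k))*(x+2*k+1)^2*((n+1)*(x+1+2*n)^4*(1+2*x+4*k)
     - (n+1-k)*(2*x+3+2*n+2*k)*(1+2*x+4*k)*(2*n-1)*(x+1+2*n)^2)
   = (x+1+2*n)^2*cert_R x n (k+1)*(-(n+1-k)*(2*x+1+2*k)*(x+2*k+2)^2)*(x+2*k+1)^2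
     - ((k+1)*(x+1+2*k)^2*(2*x+5+2*n+2*k))*(x+2*k+1)^2*(x+1+2*n)^2*cert_R x n k"
  unfolding cert_R_def by algebra

lemma cert_coeff_h1:
  fixes x n k :: complex
  shows "((k+1)*(x+1+2*k)^2*(2*x+5+2*n+2*k))*(x+2*k+1)^2*((n+1-k)*(2*x+3+2*n+2*k)*(1+2*x+4*k)*(2*(x+2)*(x+1+2*n)))
   = (x+1+2*n)^2*cert_R x n (k+1)*(2*(-(n+1-k)*(2*x+1+2*k)*(x+2*k+2)*(2*x+4*k+3))*(x+2*k+1))
     + 2*(x+1+2*n)*cert_S x n (k+1)*(-(n+1-k)*(2*x+1+2*k)*(x+2*k+2)^2)*(x+2*k+1)^2
     - ((k+1)*(x+1+2*k)^2*(2*x+5+2*n+2*k))*(x+2*k+1)^2*2*(x+1+2*n)*cert_S x n k"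
  unfolding cert_R_def cert_S_def by algebra

lemma cert_coeff_h0:
  fixes x n k :: complex
  shows "((k+1)*(x+1+2*k)^2*(2*x+5+2*n+2*k))*(x+2*k+1)^2*((n+1-k)*(2*x+3+2*n+2*k)*(1+2*x+4*k)*(2*x+3+2*n))
   = (x+1+2*n)^2*cert_R x n (k+1)*(-(n+1-k)*(2*x+1+2*k)*(2*x+4*k+3)^2)
     + 2*(x+1+2*n)*cert_S x n (k+1)*(-(n+1-k)*(2*x+1+2*k)*(x+2*k+2)*(2*x+4*k+3))*(x+2*k+1)
     + cert_W x n (k+1)*(-(n+1-k)*(2*x+1+2*k)*(x+2*k+2)^2)*(x+2*k+1)^2
     - ((k+1)*(x+1+2*k)^2*(2*x+5+2*n+2*k))*(x+2*k+1)^2*cert_W x n k"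
  unfolding cert_R_def cert_S_def cert_W_def by algebra

lemma cert_difference_expand:
  fixes x n k h e b RA RB SA SB WA WB :: complex
  assumes he: "e * ((x+2*k+1)*(x+2*k+2)) = 2*x+4*k+3"
  shows "(x+2*k+1)^2 * (RB*(x+1+2*n)^2*(h+e)^2 + 2*SB*(x+1+2*n)*(h+e) + WB) * (-(n+1-k)*(x+2*k+2)^2*(2*x+1+2*k)*b)
    - ((k+1)*(x+1+2*k)^2*(2*x+5+2*n+2*k)) * (x+2*k+1)^2 * (RA*(x+1+2*n)^2*h^2 + 2*SA*(x+1+2*n)*h + WA)*b
   = b * (h^2 * ((x+1+2*n)^2*RB*(-(n+1-k)*(2*x+1+2*k)*(x+2*k+2)^2)*(x+2*k+1)^2
     - ((k+1)*(x+1+2*k)^2*(2*x+5+2*n+2*k))*(x+2*k+1)^2*(x+1+2*n)^2*RA)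
    + h * ((x+1+2*n)^2*RB*(2*(-(n+1-k)*(2*x+1+2*k)*(x+2*k+2)*(2*x+4*k+3))*(x+2*k+1))
     + 2*(x+1+2*n)*SB*(-(n+1-k)*(2*x+1+2*k)*(x+2*k+2)^2)*(x+2*k+1)^2
     - ((k+1)*(x+1+2*k)^2*(2*x+5+2*n+2*k))*(x+2*k+1)^2*2*(x+1+2*n)*SA)
    + ((x+1+2*n)^2*RB*(-(n+1-k)*(2*x+1+2*k)*(2*x+4*k+3)^2)
     + 2*(x+1+2*n)*SB*(-(n+1-k)*(2*x+1+2*k)*(x+2*k+2)*(2*x+4*k+3))*(x+2*k+1)
     + WB*(-(n+1-k)*(2*x+1+2*k)*(x+2*k+2)^2)*(x+2*k+1)^2
     - ((k+1)*(x+1+2*k)^2*(2*x+5+2*n+2*k))*(x+2*k+1)^2*WA))"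
proof -
  have e1: "(x+2*k+1)*(x+2*k+2)^2*e = (x+2*k+2)*(2*x+4*k+3)" using he by algebra
  have e2: "(x+2*k+1)^2*(x+2*k+2)^2*e^2 = (2*x+4*k+3)^2" using he by algebra
  show ?thesis using e1 e2 by algebra
qed

text \<open>Here \<open>a0\<close>, \<open>b\<close>, \<open>b'\<close>, \<open>e\<close> stand for \<open>summand x n k\<close>, \<open>base_term x (n+1) k\<close>,
  \<open>base_term x (n+1) (k+1)\<close> and \<open>H (2k+2) x - H (2k) x\<close>; the hypotheses are the term ratios.\<close>

lemma cert_difference_identity:
  fixes x n k h e b b' a0 :: complex
  assumes nonzero: "((k+1)*(x+1+2*k)^2*(2*x+5+2*n+2*k))*(x+2*k+1)^2 \<noteq> 0"
    and ha0: "a0 * ((n+1)*(2*x+1+2*n)) = (n+1-k)*(2*x+3+2*n+2*k)*((1+2*x+4*k)*b)"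
    and hb: "b' * ((k+1)*(x+1+2*k)^2*(2*x+5+2*n+2*k)) = -(n+1-k)*(x+2*k+2)^2*(2*x+1+2*k)*b"
    and he: "e * ((x+2*k+1)*(x+2*k+2)) = 2*x+4*k+3"
  shows "(n+1)*(x+1+2*n)^4*((1+2*x+4*k)*b)*h^2 - (2*n-1)*(x+1+2*n)^2*(a0*((n+1)*(2*x+1+2*n)))*h^2
      + 2*(x+2)*(x+1+2*n)*(a0*((n+1)*(2*x+1+2*n)))*h + (2*x+3+2*n)*(a0*((n+1)*(2*x+1+2*n)))
   = (cert_R x n (k+1)*(x+1+2*n)^2*(h+e)^2 + 2*cert_S x n (k+1)*(x+1+2*n)*(h+e) + cert_W x n (k+1))*b'
      - (cert_R x n k*(x+1+2*n)^2*h^2 + 2*cert_S x n k*(x+1+2*n)*h + cert_W x n k)*b"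
    (is "?L = ?R")
proof -
  define D where "D = ((k+1)*(x+1+2*k)^2*(2*x+5+2*n+2*k))*(x+2*k+1)^2"
  have lhs_in_h: "?L = b*(h^2*((n+1)*(x+1+2*n)^4*(1+2*x+4*k) - (n+1-k)*(2*x+3+2*n+2*k)*(1+2*x+4*k)*(2*n-1)*(x+1+2*n)^2)
      + h*((n+1-k)*(2*x+3+2*n+2*k)*(1+2*x+4*k)*(2*(x+2)*(x+1+2*n)))
      + ((n+1-k)*(2*x+3+2*n+2*k)*(1+2*x+4*k)*(2*x+3+2*n)))"
    unfolding ha0 by algebra
  have lhs_scaled: "D * ?L = b*(h^2*(D*((n+1)*(x+1+2*n)^4*(1+2*x+4*k) - (n+1-k)*(2*x+3+2*n+2*k)*(1+2*x+4*k)*(2*n-1)*(x+1+2*n)^2))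
      + h*(D*((n+1-k)*(2*x+3+2*n+2*k)*(1+2*x+4*k)*(2*(x+2)*(x+1+2*n))))
      + (D*((n+1-k)*(2*x+3+2*n+2*k)*(1+2*x+4*k)*(2*x+3+2*n))))"
    unfolding lhs_in_h by algebra
  have rhs_scaled: "D * ?R = (x+2*k+1)^2 * (cert_R x n (k+1)*(x+1+2*n)^2*(h+e)^2 + 2*cert_S x n (k+1)*(x+1+2*n)*(h+e) + cert_W x n (k+1)) * (b' * ((k+1)*(x+1+2*k)^2*(2*x+5+2*n+2*k)))
    - ((k+1)*(x+1+2*k)^2*(2*x+5+2*n+2*k)) * (x+2*k+1)^2 * (cert_R x n k*(x+1+2*n)^2*h^2 + 2*cert_S x n k*(x+1+2*n)*h + cert_W x n k)*b"
    unfolding D_def by algebra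
  have "D * ?L = D * ?R"
    unfolding lhs_scaled rhs_scaled hb unfolding D_def cert_coeff_h2 cert_coeff_h1 cert_coeff_h0
    using cert_difference_expand[OF he, where h=h and n=n and b=b and RB="cert_R x n (k+1)" and SB="cert_S x n (k+1)" and WB="cert_W x n (k+1)" and RA="cert_R x n k" and SA="cert_S x n k" and WA="cert_W x n k"]
    by (simp only: ac_simps)
  then show ?thesis using nonzero unfolding D_def by simp
qed

definition rec_A :: "complex \<Rightarrow> nat \<Rightarrow> complex" where
  "rec_A x n = (of_nat n + 1) * (x + 1 + 2 * of_nat n)^4"

definition rec_B :: "complex \<Rightarrow> nat \<Rightarrow> complex" where
  "rec_B x n = (2 * of_nat n - 1) * (x + 1 + 2 * of_nat n)^2 * ((of_nat n + 1) * (2 * x + 1 + 2 * of_nat n))"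

definition rec_C :: "complex \<Rightarrow> nat \<Rightarrow> complex" where
  "rec_C x n = 2 * (x + 2) * (x + 1 + 2 * of_nat n) * ((of_nat n + 1) * (2 * x + 1 + 2 * of_nat n))"

definition rec_D :: "complex \<Rightarrow> nat \<Rightarrow> complex" where
  "rec_D x n = (2 * x + 3 + 2 * of_nat n) * ((of_nat n + 1) * (2 * x + 1 + 2 * of_nat n))"

definition cert_G :: "complex \<Rightarrow> nat \<Rightarrow> complex \<Rightarrow> nat \<Rightarrow> complex" where
  "cert_G x n t k = (cert_R x (of_nat n) (of_nat k) * (x + 1 + 2 * of_nat n)^2 * (H (2*k) x + t)^2
      + 2 * cert_S x (of_nat n) (of_nat k) * (x + 1 + 2 * of_nat n) * (H (2*k) x + t)
      + cert_W x (of_nat n) (of_nat k)) * base_term x (Suc n) k"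

lemma cert_G_difference:
  assumes hx: "Im x \<noteq> 0" and kn: "k \<le> Suc n"
  shows "rec_A x n * summand x (Suc n) k * (H (2*k) x + t)^2 - rec_B x n * summand x n k * (H (2*k) x + t)^2
     + rec_C x n * summand x n k * (H (2*k) x + t) + rec_D x n * summand x n k
     = cert_G x n t (Suc k) - cert_G x n t k"
proof -
  let ?N = "of_nat n :: complex" and ?K = "of_nat k :: complex"
  define e where "e = H (2 * Suc k) x - H (2 * k) x"
  have "?K + 1 \<noteq> 0"
    by (metis of_nat_Suc of_nat_eq_0_iff add.commute nat.distinct(1))
  then have denom: "((?K+1)*(x+1+2*?K)^2*(2*x+5+2*?N+2*?K))*(x+2*?K+1)^2 \<noteq> 0"
    by (simp add: nonreal_eq_0_iff hx)
  have Suc_n: "of_nat (Suc n) - ?K = ?N+1-?K" "2*x+3+2*of_nat (Suc n)+2*?K = 2*x+5+2*?N+2*?K"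
    by simp_all
  have base_Suc: "base_term x (Suc n) (Suc k) * ((?K+1)*(x+1+2*?K)^2*(2*x+5+2*?N+2*?K))
      = -(?N+1-?K)*(x+2*?K+2)^2*(2*x+1+2*?K)*base_term x (Suc n) k"
    using base_term_Suc_ratio[OF hx kn] unfolding Suc_n .
  have "x + 2 * ?K + 1 \<noteq> 0" "x + 2 * ?K + 2 \<noteq> 0"
    by (simp_all add: nonreal_eq_0_iff hx)
  then have e_eq: "e * ((x+2*?K+1)*(x+2*?K+2)) = 2*x+4*?K+3"
    unfolding e_def by (rule H_double_Suc_diff)
  have summand_Suc: "summand x (Suc n) k = (1+2*x+4*?K)*base_term x (Suc n) k"
    unfolding base_term_def by (simp add: nonreal_eq_0_iff hx)
  have Suc_k: "of_nat (Suc k) = ?K + 1" and H_Suc: "H (2 * Suc k) x + t = H (2 * k) x + t + e"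
    unfolding e_def by simp_all
  have G_Suc: "cert_G x n t (Suc k) = (cert_R x ?N (?K+1)*(x+1+2*?N)^2*(H (2*k) x + t + e)^2
      + 2*cert_S x ?N (?K+1)*(x+1+2*?N)*(H (2*k) x + t + e) + cert_W x ?N (?K+1))*base_term x (Suc n) (Suc k)"
    unfolding cert_G_def H_Suc Suc_k ..
  have G: "cert_G x n t k = (cert_R x ?N ?K*(x+1+2*?N)^2*(H (2*k) x + t)^2
      + 2*cert_S x ?N ?K*(x+1+2*?N)*(H (2*k) x + t) + cert_W x ?N ?K)*base_term x (Suc n) k"
    unfolding cert_G_def ..
  show ?thesis
    unfolding G_Suc G cert_difference_identity[OF denom summand_Suc_ratio[OF hx kn] base_Suc e_eq, where h="H (2*k) x + t", symmetric]
    unfolding rec_A_def rec_B_def rec_C_def rec_D_def summand_Suc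
    by algebra
qed

lemma cert_G_0: "cert_G x n t 0 = 0"
  unfolding cert_G_def cert_R_def cert_S_def cert_W_def by simp

lemma cert_G_telescope:
  assumes hx: "Im x \<noteq> 0"
  shows "(\<Sum>k=0..Suc n. rec_A x n * summand x (Suc n) k * (H (2*k) x + t)^2
      - rec_B x n * summand x n k * (H (2*k) x + t)^2
      + rec_C x n * summand x n k * (H (2*k) x + t) + rec_D x n * summand x n k) = 0"
proof -
  have "(\<Sum>k=0..Suc n. rec_A x n * summand x (Suc n) k * (H (2*k) x + t)^2
      - rec_B x n * summand x n k * (H (2*k) x + t)^2
      + rec_C x n * summand x n k * (H (2*k) x + t) + rec_D x n * summand x n k)
      = (\<Sum>k=0..Suc n. cert_G x n t (Suc k) - cert_G x n t k)"
    by (rule sum.cong) (simp_all add: cert_G_difference[OF hx])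
  also have "\<dots> = cert_G x n t (Suc (Suc n)) - cert_G x n t 0"
    by (rule sum_Suc_diff) simp
  also have "\<dots> = 0"
    unfolding cert_G_0 by (simp add: cert_G_def base_term_def summand_eq_0_if_gt)
  finally show ?thesis .
qed

definition hsum :: "complex \<Rightarrow> nat \<Rightarrow> nat \<Rightarrow> complex" where
  "hsum x n j = (\<Sum>k=0..n. summand x n k * H (2*k) x ^ j)"

lemma hsum_recurrences:
  assumes hx: "Im x \<noteq> 0"
  shows "t^2 * (rec_A x n * hsum x (Suc n) 0 - rec_B x n * hsum x n 0)
       + t * (2 * rec_A x n * hsum x (Suc n) 1 - 2 * rec_B x n * hsum x n 1 + rec_C x n * hsum x n 0)
       + (rec_A x n * hsum x (Suc n) 2 - rec_B x n * hsum x n 2 + rec_C x n * hsum x n 1 + rec_D x n * hsum x n 0)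
       = 0"
proof -
  define A B C D where "A = rec_A x n" "B = rec_B x n" "C = rec_C x n" "D = rec_D x n"
  define a a' h where "a k = summand x n k" "a' k = summand x (Suc n) k" "h k = H (2*k) x" for k
  have hsum_n: "(\<Sum>k=0..Suc n. a k * h k ^ j) = hsum x n j" for j
    by (simp add: a_a'_h_def hsum_def summand_eq_0_if_gt)
  have hsum_Suc_n: "(\<Sum>k=0..Suc n. a' k * h k ^ j) = hsum x (Suc n) j" for j
    by (simp add: a_a'_h_def hsum_def)
  define P Q R where
    "P k = A * (a' k * h k ^ 0) - B * (a k * h k ^ 0)"
    "Q k = 2 * A * (a' k * h k ^ 1) - 2 * B * (a k * h k ^ 1) + C * (a k * h k ^ 0)"
    "R k = A * (a' k * h k ^ 2) - B * (a k * h k ^ 2) + C * (a k * h k ^ 1) + D * (a k * h k ^ 0)" for k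
  have "A * a' k * (h k + t)^2 - B * a k * (h k + t)^2 + C * a k * (h k + t) + D * a k
      = t^2 * P k + t * Q k + R k" for k
    unfolding P_Q_R_def by algebra
  then have "0 = (\<Sum>k=0..Suc n. t^2 * P k + t * Q k + R k)"
    using cert_G_telescope[OF hx, of n t] unfolding A_B_C_D_def a_a'_h_def by simp
  also have "\<dots> = t^2 * sum P {0..Suc n} + t * sum Q {0..Suc n} + sum R {0..Suc n}"
    by (simp only: sum.distrib sum_distrib_left)
  also have "sum P {0..Suc n} = A * hsum x (Suc n) 0 - B * hsum x n 0"
    unfolding P_Q_R_def hsum_n[symmetric] hsum_Suc_n[symmetric]
    by (simp only: sum_subtractf sum_distrib_left)
  also have "sum Q {0..Suc n} = 2 * A * hsum x (Suc n) 1 - 2 * B * hsum x n 1 + C * hsum x n 0"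
    unfolding P_Q_R_def hsum_n[symmetric] hsum_Suc_n[symmetric]
    by (simp only: sum.distrib sum_subtractf sum_distrib_left)
  also have "sum R {0..Suc n} = A * hsum x (Suc n) 2 - B * hsum x n 2 + C * hsum x n 1 + D * hsum x n 0"
    unfolding P_Q_R_def hsum_n[symmetric] hsum_Suc_n[symmetric]
    by (simp only: sum.distrib sum_subtractf sum_distrib_left)
  finally show ?thesis
    unfolding A_B_C_D_def by (rule sym)
qed

section \<open>Closed forms\<close>

definition closed_factor :: "complex \<Rightarrow> nat \<Rightarrow> complex" where
  "closed_factor x n = ((x - 1/2 + of_nat n) gchoose n) * ((-3/2 + of_nat n) gchoose n)
     / ((((x - 1) / 2 + of_nat n) gchoose n)^2)"

definition closed_harm :: "complex \<Rightarrow> nat \<Rightarrow> complex" where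
  "closed_harm x n = H n ((x - 1) / 2) - H n (-3/2)"

lemma two_of_nat_minus_one_neq_0: "2 * of_nat n - 1 \<noteq> (0 :: 'a :: field_char_0)"
proof
  assume "2 * of_nat n - 1 = (0 :: 'a)"
  then have "of_nat (2 * n) = (of_nat 1 :: 'a)" by simp
  then have "2 * n = 1" by (simp only: of_nat_eq_iff)
  then show False by presburger
qed

lemma rec_A_nonzero:
  assumes hx: "Im x \<noteq> 0"
  shows "rec_A x n \<noteq> 0"
proof -
  have "(of_nat n + 1 :: complex) \<noteq> 0"
    by (metis of_nat_Suc of_nat_eq_0_iff add.commute nat.distinct(1))
  then show ?thesis
    unfolding rec_A_def by (simp add: nonreal_eq_0_iff hx)
qed

lemma closed_factor_Suc:
  assumes hx: "Im x \<noteq> 0"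
  shows "rec_A x n * closed_factor x (Suc n) = rec_B x n * closed_factor x n"
proof -
  let ?N = "of_nat n :: complex"
  define g where "g = (x - 1) / 2 + of_nat (Suc n)"
  define r where "r = 2 * ?N - 1"
  define w where "w = 2*x+1+2*?N"
  define p where "p = ?N + 1"
  have nonzero: "(of_nat (Suc n) :: complex) \<noteq> 0" "((x - 1)/2 + ?N) gchoose n \<noteq> 0" "g \<noteq> 0"
    unfolding g_def by (simp_all only: of_nat_neq_0) (simp_all add: gbinomial_nonreal_nonzero nonreal_eq_0_iff hx)
  have "A * ((A' * a / q) * (B * b / q) / ((G * g / q)^2)) = (A * (a * b / g^2)) * (A' * B / G^2)"
    if "q \<noteq> 0" "G \<noteq> 0" for A A' B G a b q :: complex
    using that nonzero(3) by (simp add: field_simps power2_eq_square)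
  from this[OF nonzero(1,2)]
  have "rec_A x n * closed_factor x (Suc n)
      = (rec_A x n * ((x - 1/2 + of_nat (Suc n)) * (-3/2 + of_nat (Suc n)) / g^2)) * closed_factor x n"
    unfolding closed_factor_def gbinomial_Suc_shift unfolding g_def[symmetric] .
  also have "rec_A x n * ((x - 1/2 + of_nat (Suc n)) * (-3/2 + of_nat (Suc n)) / g^2) = rec_B x n"
  proof -
    have g2: "x + 1 + 2 * ?N = 2 * g"
      unfolding g_def by (simp add: field_simps)
    have substs: "x - 1/2 + of_nat (Suc n) = w / 2" "-3/2 + of_nat (Suc n) = r / 2" "?N + 1 = p"
      "rec_B x n = r * (2 * g)^2 * (p * w)"
      unfolding r_def w_def p_def rec_B_def g2[symmetric] by (simp_all add: field_simps)
    have "(p * (2 * g)^4) * ((w / 2) * (r / 2) / g^2) = r * (2 * g)^2 * (p * w)"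
      using nonzero(3) by (simp add: field_simps power2_eq_square power4_eq_xxxx)
    then show ?thesis
      unfolding rec_A_def g2 substs .
  qed
  finally show ?thesis .
qed

lemma harm_increment_coeffs:
  fixes x :: complex
  assumes g: "(x - 1) / 2 + of_nat (Suc n) \<noteq> 0"
  defines "d \<equiv> 1 / ((x - 1) / 2 + of_nat (Suc n)) - 1 / (-3/2 + of_nat (Suc n))"
  shows "rec_B x n * d = - rec_C x n"
    and "rec_B x n * (d^2 - 1 / (-3/2 + of_nat (Suc n))^2) = -4 * rec_D x n"
proof -
  let ?N = "of_nat n :: complex"
  define g where "g = (x - 1) / 2 + of_nat (Suc n)"
  define r where "r = 2 * ?N - 1"
  define pw where "pw = (?N + 1) * (2 * x + 1 + 2 * ?N)"
  have "r \<noteq> 0"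
    unfolding r_def by (rule two_of_nat_minus_one_neq_0)
  have g2: "x + 1 + 2 * ?N = 2 * g"
    unfolding g_def by (simp add: field_simps)
  have lin: "-3/2 + of_nat (Suc n) = r / 2" "x + 2 = 2 * g - r" "2 * x + 3 + 2 * ?N = 4 * g - r"
    unfolding g_def r_def by (simp_all add: field_simps)
  have substs: "-3/2 + of_nat (Suc n) = r / 2"
    "rec_B x n = r * (2 * g)^2 * pw" "rec_C x n = 2 * (2 * g - r) * (2 * g) * pw" "rec_D x n = (4 * g - r) * pw"
    unfolding rec_B_def rec_C_def rec_D_def g2 lin pw_def[symmetric] r_def[symmetric] by simp_all
  have "(r * (2 * g)^2 * pw) * (1 / g - 1 / (r / 2)) = - (2 * (2 * g - r) * (2 * g) * pw)"
    using g `r \<noteq> 0` unfolding g_def[symmetric] by (simp add: field_simps power2_eq_square)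
  then show "rec_B x n * d = - rec_C x n"
    unfolding d_def g_def[symmetric] substs .
  have "(r * (2 * g)^2 * pw) * ((1 / g - 1 / (r / 2))^2 - 1 / (r / 2)^2) = -4 * ((4 * g - r) * pw)"
    using g `r \<noteq> 0` unfolding g_def[symmetric] by (simp add: field_simps power2_eq_square)
  then show "rec_B x n * (d^2 - 1 / (-3/2 + of_nat (Suc n))^2) = -4 * rec_D x n"
    unfolding d_def g_def[symmetric] substs .
qed

lemma recurrence_step_solution:
  fixes A B C D c c' h d e e' S0 S1 S2 S0' S1' S2' :: complex
  assumes A: "A \<noteq> 0"
    and rec: "\<And>t. t^2 * (A * S0' - B * S0) + t * (2 * A * S1' - 2 * B * S1 + C * S0)
          + (A * S2' - B * S2 + C * S1 + D * S0) = 0"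
    and c': "A * c' = B * c" and d: "B * d = - C" and e: "B * (d^2 - e) = -4 * D"
    and S0: "S0 = c" and S1: "2 * S1 = c * h" and S2: "4 * S2 = c * (h^2 - e')"
  shows "S0' = c' \<and> 2 * S1' = c' * (h + d) \<and> 4 * S2' = c' * ((h + d)^2 - (e' + e))"
proof -
  have r0: "A * S2' - B * S2 + C * S1 + D * S0 = 0"
    using rec[of 0] by simp
  have "(A * S0' - B * S0) + (2 * A * S1' - 2 * B * S1 + C * S0) + (A * S2' - B * S2 + C * S1 + D * S0) = 0"
    using rec[of 1] by simp
  moreover have "4 * (A * S0' - B * S0) + 2 * (2 * A * S1' - 2 * B * S1 + C * S0) + (A * S2' - B * S2 + C * S1 + D * S0) = 0"
    using rec[of 2] by algebra
  ultimately have r2: "A * S0' - B * S0 = 0" and r1: "2 * A * S1' - 2 * B * S1 + C * S0 = 0"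
    using r0 by algebra+
  have "A * (S0' - c') = 0" using r2 c' S0 by algebra
  moreover have "A * (2 * S1' - c' * (h + d)) = 0" using r1 c' d S0 S1 by algebra
  moreover have "A * (4 * S2' - c' * ((h + d)^2 - (e' + e))) = 0" using r0 c' d e S0 S1 S2 by algebra
  ultimately show ?thesis
    using A by simp
qed

lemma hsum_closed_forms:
  assumes hx: "Im x \<noteq> 0"
  shows "hsum x n 0 = closed_factor x n \<and> 2 * hsum x n 1 = closed_factor x n * closed_harm x n
    \<and> 4 * hsum x n 2 = closed_factor x n * ((closed_harm x n)^2 - H2 n (-3/2))"
proof (induction n)
  case 0
  have "1 + 2 * x \<noteq> 0"
    by (simp add: nonreal_eq_0_iff hx)
  then show ?case
    by (simp add: hsum_def summand_def closed_factor_def closed_harm_def H_def H2_def)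
next
  case (Suc n)
  have "(x - 1) / 2 + of_nat (Suc n) \<noteq> 0"
    by (simp add: nonreal_eq_0_iff hx)
  note coeffs = harm_increment_coeffs[OF this]
  have closed_harm_Suc: "closed_harm x (Suc n) = closed_harm x n + (1 / ((x - 1) / 2 + of_nat (Suc n)) - 1 / (-3/2 + of_nat (Suc n)))"
    and H2_Suc: "H2 (Suc n) (-3/2) = H2 n (-3/2) + 1 / (-3/2 + of_nat (Suc n))^2"
    unfolding closed_harm_def H_def H2_def by simp_all
  from Suc.IH have "hsum x n 0 = closed_factor x n" "2 * hsum x n 1 = closed_factor x n * closed_harm x n"
    "4 * hsum x n 2 = closed_factor x n * ((closed_harm x n)^2 - H2 n (-3/2))"
    by blast+
  then show ?case
    unfolding closed_harm_Suc H2_Suc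
    by (rule recurrence_step_solution[OF rec_A_nonzero[OF hx] hsum_recurrences[OF hx] closed_factor_Suc[OF hx] coeffs])
qed

lemma hsum2_closed_form:
  assumes "Im x \<noteq> 0"
  shows "hsum x n 2 = 1/4 * closed_factor x n * ((closed_harm x n)^2 - H2 n (-3/2))"
proof -
  have "4 * hsum x n 2 = closed_factor x n * ((closed_harm x n)^2 - H2 n (-3/2))"
    using hsum_closed_forms[OF assms, of n] by blast
  then show ?thesis
    by (simp add: field_simps)
qed

section \<open>Continuity in \<open>x\<close>\<close>

lemma isCont_gbinomial:
  fixes f :: "'a :: t2_space \<Rightarrow> 'b :: real_normed_field"
  shows "isCont f x \<Longrightarrow> isCont (\<lambda>z. f z gchoose k) x"
  unfolding gbinomial_prod_rev by (intro continuous_intros) auto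

lemma isCont_hsum2:
  fixes n :: nat and x :: complex
  assumes hx: "\<And>j. 1 \<le> j \<Longrightarrow> j \<le> 2 * n \<Longrightarrow> x + of_nat j \<noteq> 0"
    and hd1: "\<And>k. k \<le> n \<Longrightarrow> ((x - 1) / 2 + of_nat k) gchoose k \<noteq> 0"
    and hd2: "\<And>k. k \<le> n \<Longrightarrow> (x - 1/2 + of_nat n + of_nat k) gchoose k \<noteq> 0"
    and hd3: "\<And>k. k \<le> n \<Longrightarrow> 1 + 2 * x + 2 * of_nat n + 2 * of_nat k \<noteq> 0"
  shows "isCont (\<lambda>z. hsum z n 2) x"
  unfolding hsum_def summand_def
proof (intro continuous_intros isCont_gbinomial)
  fix k assume k: "k \<in> {0..n}"
  then show "(((x - 1) / 2 + of_nat k) gchoose k)^2 * ((x - 1/2 + of_nat n + of_nat k) gchoose k) \<noteq> 0"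
    and "1 + 2 * x + 2 * of_nat n + 2 * of_nat k \<noteq> 0"
    using hd1[of k] hd2[of k] hd3[of k] by simp_all
  show "isCont (\<lambda>z. H (2 * k) z) x"
    unfolding H_def
  proof (intro continuous_intros)
    fix j assume "j \<in> {1..2*k}"
    with k show "x + of_nat j \<noteq> 0" using hx[of j] by simp
  qed
qed simp_all

lemma isCont_closed_form:
  fixes n :: nat and x :: complex
  assumes hx2: "\<And>j. 1 \<le> j \<Longrightarrow> j \<le> n \<Longrightarrow> (x - 1) / 2 + of_nat j \<noteq> 0"
    and hd1: "\<And>k. k \<le> n \<Longrightarrow> ((x - 1) / 2 + of_nat k) gchoose k \<noteq> 0"
  shows "isCont (\<lambda>z. 1/4 * closed_factor z n * ((closed_harm z n)^2 - H2 n (-3/2))) x"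
  unfolding closed_factor_def closed_harm_def
proof (intro continuous_intros isCont_gbinomial)
  show "(((x - 1) / 2 + of_nat n) gchoose n)^2 \<noteq> 0"
    using hd1[of n] by simp
  show "isCont (\<lambda>z. H n ((z - 1) / 2)) x"
    unfolding H_def
  proof (intro continuous_intros)
    fix j assume "j \<in> {1..n}"
    then show "(x - 1) / 2 + of_nat j \<noteq> 0" using hx2[of j] by simp
  qed simp_all
qed simp_all

lemma isCont_eq_if_eq_off_real_axis:
  fixes f g :: "complex \<Rightarrow> 'a :: t2_space"
  assumes "isCont f x" "isCont g x" and off_real: "\<And>z. Im z \<noteq> 0 \<Longrightarrow> f z = g z"
  shows "f x = g x"
proof (cases "Im x = 0")
  case True
  define z where "z j = x + \<i> * of_real (inverse (real (Suc j)))" for j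
  have "z \<longlonglongrightarrow> x + \<i> * of_real 0"
    unfolding z_def by (intro tendsto_intros LIMSEQ_inverse_real_of_nat)
  then have lim: "z \<longlonglongrightarrow> x" by simp
  have eq: "f (z j) = g (z j)" for j
    using True by (intro off_real) (simp add: z_def)
  have "(\<lambda>j. f (z j)) \<longlonglongrightarrow> f x"
    by (rule isCont_tendsto_compose[OF assms(1) lim])
  moreover have "(\<lambda>j. f (z j)) \<longlonglongrightarrow> g x"
    unfolding eq by (rule isCont_tendsto_compose[OF assms(2) lim])
  ultimately show ?thesis
    by (rule LIMSEQ_unique)
qed (rule off_real)

theorem theorem8:
  fixes n :: nat and x :: complex
  assumes hx: "\<And>j. 1 \<le> j \<Longrightarrow> j \<le> 2 * n \<Longrightarrow> x + of_nat j \<noteq> 0"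
    and hx2: "\<And>j. 1 \<le> j \<Longrightarrow> j \<le> n \<Longrightarrow> (x - 1) / 2 + of_nat j \<noteq> 0"
    and hd1: "\<And>k. k \<le> n \<Longrightarrow> ((x - 1) / 2 + of_nat k) gchoose k \<noteq> 0"
    and hd2: "\<And>k. k \<le> n \<Longrightarrow> (x - 1/2 + of_nat n + of_nat k) gchoose k \<noteq> 0"
    and hd3: "\<And>k. k \<le> n \<Longrightarrow> 1 + 2 * x + 2 * of_nat n + 2 * of_nat k \<noteq> 0"
  shows "(\<Sum>k=0..n. (-1)^k * of_nat (n choose k)
            * (((x / 2 + of_nat k) gchoose k)^2 * ((x - 1/2 + of_nat k) gchoose k))
            / ((((x - 1) / 2 + of_nat k) gchoose k)^2 * ((x - 1/2 + of_nat n + of_nat k) gchoose k))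
            * ((1 + 2 * x + 4 * of_nat k) / (1 + 2 * x + 2 * of_nat n + 2 * of_nat k))
            * (H (2 * k) x)^2)
         = 1/4 * (((x - 1/2 + of_nat n) gchoose n) * ((-3/2 + of_nat n) gchoose n))
             / ((((x - 1) / 2 + of_nat n) gchoose n)^2)
           * ((H n ((x - 1) / 2) - H n (-3/2))^2 - H2 n (-3/2))"
proof -
  have "hsum x n 2 = 1/4 * closed_factor x n * ((closed_harm x n)^2 - H2 n (-3/2))"
    by (rule isCont_eq_if_eq_off_real_axis[OF isCont_hsum2[OF hx hd1 hd2 hd3]
          isCont_closed_form[OF hx2 hd1] hsum2_closed_form])
  then show ?thesis
    unfolding hsum_def summand_def closed_factor_def closed_harm_def by (simp only: times_divide_eq_right)
qed

end
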